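(* Fix $\nu\in(0,1]$, $k\in\mathbb{N}$ and $\lambda_1,\dots,\lambda_k>0$, and let $\{M^{\nu}(t);t\ge 0\}$ be a counting process whose distribution $p_j^{\nu}(t)=\mathbb{P}\{M^{\nu}(t)=j\}$, $j\in\mathbb{N}_0$, satisfies the fractional system described in the context together with $p_0^\nu(0)=1$, $p_j^\nu(0)=0$ for $j\ge1$. Then \[ \mathbb{E}\left[e^{sM^{\nu}(t)}\right]=E_{\nu,1}\Big(\sum_{j=1}^k\lambda_j\left(e^{js}-1\right)t^{\nu}\Big),\qquad t\ge0,\ s\in\mathbb{R}. \]
   Context: The fractional derivative is the Caputo derivative: for $0<\nu<1$, $\frac{d^\nu f(t)}{dt^\nu}=\frac{1}{\Gamma(1-\nu)}\int_0^t \frac{f'(s)}{(t-s)^{\nu}}\,ds$, and for $\nu=1$ it is the ordinary derivative $f'(t)$. With $\Lambda=\lambda_1+\dots+\lambda_k$, the system is: $\frac{d^\nu p_0^\nu(t)}{dt^\nu}=-\Lambda p_0^\nu(t)$; $\frac{d^\nu p_j^\nu(t)}{dt^\nu}=\sum_{r=1}^{j}\lambda_r p_{j-r}^\nu(t)-\Lambda p_j^\nu(t)$ for $j=1,\dots,k-1$; $\frac{d^\nu p_j^\nu(t)}{dt^\nu}=\sum_{r=1}^{k}\lambda_r p_{j-r}^\nu(t)-\Lambda p_j^\nu(t)$ for $j\ge k$. $E_{\alpha,\beta}(x)=\sum_{r\ge0}\frac{x^r}{\Gamma(\alpha r+\beta)}$ is the two-parameter Mittag-Leffler function. *)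

theory Defs
  imports "HOL-Probability.Probability"
begin

definition mittag_leffler :: "real \<Rightarrow> real \<Rightarrow> real \<Rightarrow> real" where
  "mittag_leffler \<alpha> \<beta> x = (\<Sum>r. x ^ r / Gamma (\<alpha> * real r + \<beta>))"

definition has_caputo_derivative :: "real \<Rightarrow> (real \<Rightarrow> real) \<Rightarrow> real \<Rightarrow> real \<Rightarrow> bool" where
  "has_caputo_derivative \<nu> f t D \<longleftrightarrow>
     (if \<nu> = 1 then (f has_real_derivative D) (at t)
      else (\<forall>s\<in>{0<..<t}. f differentiable (at s)) \<and>
           (\<exists>I. ((\<lambda>s. deriv f s * (t - s) powr (- \<nu>)) has_integral I) {0..t} \<and>
                D = I / Gamma (1 - \<nu>)))"

end

theory Submission
  imports Defs "HOL-Computational_Algebra.Polynomial"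
begin

text \<open>
  With \<open>P(y) = \<Sum>r. \<lambda>\<^sub>r (y^r - 1)\<close> the system says \<open>D^\<nu> p\<^sub>j = \<Sum>i\<le>j. [y^i]P \<cdot> p\<^sub>j\<^sub>-\<^sub>i\<close>,
  i.e. the generating function \<open>G(y,t) = \<Sum>j. p\<^sub>j(t) y^j\<close> solves \<open>D^\<nu> G = P(y) G\<close>.
  Since \<open>D^\<nu>\<close> maps \<open>t^(\<nu> n) / \<Gamma>(\<nu> n + 1)\<close> to \<open>t^(\<nu>(n-1)) / \<Gamma>(\<nu>(n-1) + 1)\<close>, the functions
  \<open>q\<^sub>j(t) = \<Sum>n. [y^j]P^n t^(\<nu> n) / \<Gamma>(\<nu> n + 1)\<close> solve the system with the same initial values,
  and summing over \<open>j\<close> (absolutely: \<open>[y^j]P^n\<close> is dominated by the coefficients of the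
  polynomial with coefficients \<open>\<bar>[y^i]P\<bar>\<close>) gives \<open>\<Sum>j. q\<^sub>j(t) y^j = E_{\<nu>,1}(P(y) t^\<nu>)\<close>.
  A maximum principle for \<open>D^\<nu> d = -\<Lambda> d\<close> with \<open>\<Lambda> \<ge> 0\<close> shows, by induction on \<open>j\<close>, that
  \<open>p\<^sub>j = q\<^sub>j\<close>; taking \<open>y = e^s\<close> yields the moment generating function.
\<close>

section \<open>Mittag-Leffler type series\<close>

lemma Gamma_plus1_lower_bound:
  fixes x :: real
  assumes x: "x \<ge> 1"
  shows "x powr x * exp (-2*x) \<le> Gamma (x + 1)"
proof -
  let ?f = "\<lambda>u. u powr x / exp u"
  have Gamma: "(?f has_integral Gamma (x + 1)) {0..}"
    using Gamma_integral_real[of "x + 1"] x by simp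
  have "continuous_on {x..2*x} ?f"
    using x by (intro continuous_intros) auto
  then have I: "(?f has_integral integral {x..2*x} ?f) {x..2*x}"
    using integrable_continuous_interval by blast
  have "((\<lambda>u. x powr x * exp (-2*x)) has_integral x * (x powr x * exp (-2*x))) {x..2*x}"
    using has_integral_const_real[of "x powr x * exp (-2*x)" x "2*x"] x by simp
  then have "x * (x powr x * exp (-2*x)) \<le> integral {x..2*x} ?f"
  proof (rule has_integral_le[OF _ I])
    fix u assume u: "u \<in> {x..2*x}"
    have "x powr x \<le> u powr x"
      using u x by (intro powr_mono2) auto
    moreover have "exp (-2*x) \<le> inverse (exp u)"
      using u by (simp add: exp_minus[symmetric])
    ultimately show "x powr x * exp (-2*x) \<le> ?f u"
      by (simp add: divide_inverse mult_mono)
  qed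
  also have "\<dots> \<le> Gamma (x + 1)"
    by (rule has_integral_subset_le[OF _ I Gamma]) (use x in auto)
  finally have "x * (x powr x * exp (-2*x)) \<le> Gamma (x + 1)" .
  moreover have "x powr x * exp (-2*x) \<le> x * (x powr x * exp (-2*x))"
    using mult_right_mono[OF x, of "x powr x * exp (-2*x)"] by simp
  ultimately show ?thesis
    by linarith
qed

lemma Gamma_mult_nat_plus1_lower_bound:
  fixes \<alpha> :: real
  assumes \<alpha>: "\<alpha> > 0" and n: "\<alpha> * real n \<ge> 1"
  shows "((\<alpha> * real n) powr \<alpha> * exp (-2*\<alpha>)) ^ n \<le> Gamma (\<alpha> * real n + 1)"
proof -
  let ?x = "\<alpha> * real n"
  have "n > 0"
    using n by (cases n) auto
  then have "(?x powr \<alpha>) ^ n = (?x powr \<alpha>) powr real n"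
    using \<alpha> by (subst powr_realpow) auto
  also have "\<dots> = ?x powr ?x"
    by (simp add: powr_powr mult_ac)
  finally have "(?x powr \<alpha> * exp (-2*\<alpha>)) ^ n = ?x powr ?x * exp (-2 * ?x)"
    unfolding power_mult_distrib by (simp add: exp_of_nat_mult[symmetric] mult_ac)
  with Gamma_plus1_lower_bound[OF n] show ?thesis
    by simp
qed

lemma summable_Mittag_Leffler:
  fixes \<alpha> z :: real
  assumes \<alpha>: "\<alpha> > 0"
  shows "summable (\<lambda>n. \<bar>z\<bar> ^ n / Gamma (\<alpha> * real n + 1))"
proof (rule summable_comparison_test'[where g = "\<lambda>n. (1/2)^n"])
  show "summable (\<lambda>n. (1/2::real)^n)"
    by (rule summable_geometric) auto
  define C where "C = 2 * (\<bar>z\<bar> + 1) * exp (2*\<alpha>)"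
  have C: "C > 0"
    unfolding C_def by (auto intro!: mult_pos_pos add_nonneg_pos)
  show "norm (\<bar>z\<bar> ^ n / Gamma (\<alpha> * real n + 1)) \<le> (1/2) ^ n"
    if n: "n \<ge> nat \<lceil>max 1 (C powr (1/\<alpha>)) / \<alpha>\<rceil>" for n
  proof -
    have x: "\<alpha> * real n \<ge> 1" "C powr (1/\<alpha>) \<le> \<alpha> * real n"
      using n \<alpha> by (simp_all add: field_simps)
    have Gamma_pos: "Gamma (\<alpha> * real n + 1) > 0"
      using x by (intro Gamma_real_pos) auto
    have "C = (C powr (1/\<alpha>)) powr \<alpha>"
      using C \<alpha> by (simp add: powr_powr)
    also have "\<dots> \<le> (\<alpha> * real n) powr \<alpha>"
      using x \<alpha> C by (intro powr_mono2) auto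
    finally have "(C * exp (-2*\<alpha>)) ^ n \<le> ((\<alpha> * real n) powr \<alpha> * exp (-2*\<alpha>)) ^ n"
      using C by (intro power_mono mult_right_mono) auto
    also have "\<dots> \<le> Gamma (\<alpha> * real n + 1)"
      by (rule Gamma_mult_nat_plus1_lower_bound[OF \<alpha> x(1)])
    also have "C * exp (-2*\<alpha>) = 2 * (\<bar>z\<bar> + 1)"
      unfolding C_def by (simp add: exp_minus)
    finally have "\<bar>z\<bar> ^ n / Gamma (\<alpha> * real n + 1) \<le> \<bar>z\<bar> ^ n / (2 * (\<bar>z\<bar> + 1)) ^ n"
      using Gamma_pos by (intro divide_left_mono) (auto intro!: mult_pos_pos)
    also have "\<dots> \<le> (1/2) ^ n"
      unfolding power_divide[symmetric] by (intro power_mono) (auto simp: field_simps)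
    finally show ?thesis
      using Gamma_pos by simp
  qed
qed

text \<open>For \<open>b n = z^n\<close>, \<open>ml_series \<nu> b t\<close> is \<open>E_{\<nu>,1}(z t^\<nu>)\<close>.\<close>
definition ml_coeff :: "real \<Rightarrow> (nat \<Rightarrow> real) \<Rightarrow> nat \<Rightarrow> real" where
  "ml_coeff \<nu> b n = b n / Gamma (\<nu> * real n + 1)"

definition ml_series :: "real \<Rightarrow> (nat \<Rightarrow> real) \<Rightarrow> real \<Rightarrow> real" where
  "ml_series \<nu> b t = (\<Sum>n. ml_coeff \<nu> b n * (t powr \<nu>) ^ n)"

lemma Gamma_mult_nat_plus1_pos: "\<nu> \<ge> 0 \<Longrightarrow> Gamma (\<nu> * real n + 1) > 0"
  by (intro Gamma_real_pos add_nonneg_pos) auto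

lemma summable_ml_coeff_abs:
  assumes \<nu>: "\<nu> > 0" and b: "\<And>n. \<bar>b n\<bar> \<le> C * R ^ n"
  shows "summable (\<lambda>n. \<bar>ml_coeff \<nu> b n * x ^ n\<bar>)"
proof (rule summable_comparison_test')
  show "summable (\<lambda>n. \<bar>C\<bar> * (\<bar>R * x\<bar> ^ n / Gamma (\<nu> * real n + 1)))"
    by (intro summable_mult summable_Mittag_Leffler \<nu>)
  fix n
  have G: "Gamma (\<nu> * real n + 1) > 0"
    using \<nu> by (simp add: Gamma_mult_nat_plus1_pos)
  have "\<bar>b n\<bar> * \<bar>x\<bar> ^ n \<le> (\<bar>C\<bar> * \<bar>R\<bar> ^ n) * \<bar>x\<bar> ^ n"
    using b[of n] abs_ge_self[of "C * R ^ n"] by (intro mult_right_mono) (auto simp: abs_mult power_abs)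
  then show "norm \<bar>ml_coeff \<nu> b n * x ^ n\<bar> \<le> \<bar>C\<bar> * (\<bar>R * x\<bar> ^ n / Gamma (\<nu> * real n + 1))"
    using G by (simp add: ml_coeff_def abs_mult power_abs power_mult_distrib divide_right_mono mult_ac)
qed

lemma ml_series_0: "ml_series \<nu> b 0 = b 0"
  unfolding ml_series_def powr_0 powser_zero by (simp add: ml_coeff_def)

lemma ml_series_sum:
  assumes "finite I" and "\<And>i. i \<in> I \<Longrightarrow> summable (\<lambda>n. ml_coeff \<nu> (b i) n * (t powr \<nu>) ^ n)"
  shows "(\<Sum>i\<in>I. w i * ml_series \<nu> (b i) t) = ml_series \<nu> (\<lambda>n. \<Sum>i\<in>I. w i * b i n) t"
proof -
  have "(\<Sum>i\<in>I. w i * ml_series \<nu> (b i) t) = (\<Sum>n. \<Sum>i\<in>I. w i * (ml_coeff \<nu> (b i) n * (t powr \<nu>) ^ n))"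
    unfolding ml_series_def using assms
    by (subst suminf_sum) (auto simp: suminf_mult intro: summable_mult)
  also have "\<dots> = ml_series \<nu> (\<lambda>n. \<Sum>i\<in>I. w i * b i n) t"
    by (simp add: ml_series_def ml_coeff_def sum_distrib_left sum_divide_distrib mult_ac)
  finally show ?thesis .
qed

section \<open>The Caputo derivative of a Mittag-Leffler type series\<close>

lemma has_integral_Beta_real_scaled:
  fixes a b t :: real
  assumes a: "a > 0" and b: "b > 0" and t: "t > 0"
  shows "((\<lambda>s. s powr (a - 1) * (t - s) powr (b - 1)) has_integral t powr (a + b - 1) * Beta a b) {0..t}"
proof -
  let ?f = "\<lambda>u. u powr (a - 1) * (1 - u) powr (b - 1)"
  have "((\<lambda>x. ?f ((1/t) * x + 0)) has_integral (1 / \<bar>1/t\<bar>) *\<^sub>R Beta a b) ((\<lambda>x. x / (1/t) - 0 / (1/t)) ` {0..1})"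
    by (rule has_integral_affinity01[OF has_integral_Beta_real[OF a b]]) (use t in auto)
  moreover have "(\<lambda>x. x / (1/t) - 0 / (1/t)) ` {0..1} = {0..t}"
    using image_affinity_atLeastAtMost_div[of "1/t" 0 0 1] t by simp
  ultimately have "((\<lambda>x. ?f (x / t)) has_integral t * Beta a b) {0..t}"
    using t by simp
  then have "((\<lambda>x. t powr (a + b - 2) * ?f (x / t)) has_integral t powr (a + b - 2) * (t * Beta a b)) {0..t}"
    by (rule has_integral_mult_right)
  moreover have "t powr (a + b - 2) * (t * Beta a b) = t powr (a + b - 1) * Beta a b"
    using t by (simp add: powr_diff power2_eq_square)
  ultimately have I: "((\<lambda>x. t powr (a + b - 2) * ?f (x / t)) has_integral t powr (a + b - 1) * Beta a b) {0..t}"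
    by simp
  show ?thesis
  proof (rule has_integral_eq[OF _ I])
    fix s assume s: "s \<in> {0..t}"
    have "1 - s / t = (t - s) / t"
      using t by (simp add: field_simps)
    then have "?f (s / t) = s powr (a - 1) / t powr (a - 1) * ((t - s) powr (b - 1) / t powr (b - 1))"
      using s t by (simp add: powr_divide)
    moreover have "t powr (a + b - 2) = t powr (a - 1) * t powr (b - 1)"
      using t by (simp add: powr_add[symmetric])
    ultimately show "t powr (a + b - 2) * ?f (s / t) = s powr (a - 1) * (t - s) powr (b - 1)"
      using t by (simp add: field_simps)
  qed
qed

lemma powr_Suc_mult_minus_one:
  fixes s :: real
  assumes "s > 0"
  shows "s powr (\<nu> * real (Suc n) - 1) = (s powr \<nu>) ^ n * s powr (\<nu> - 1)"
  using assms by (simp add: powr_add[symmetric] powr_realpow[symmetric] powr_powr algebra_simps)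

lemma has_integral_power_Caputo_kernel:
  assumes "0 < \<nu>" "\<nu> < 1" "t > 0"
  shows "((\<lambda>s. s powr (\<nu> * real (Suc n) - 1) * (t - s) powr (- \<nu>))
           has_integral (t powr \<nu>) ^ n * Beta (\<nu> * real (Suc n)) (1 - \<nu>)) {0..t}"
proof -
  have "t powr (\<nu> * real (Suc n) + (1 - \<nu>) - 1) = (t powr \<nu>) ^ n"
    using assms by (simp add: powr_realpow[symmetric] powr_powr algebra_simps)
  then show ?thesis
    using has_integral_Beta_real_scaled[of "\<nu> * real (Suc n)" "1 - \<nu>" t] assms by simp
qed

lemma has_integral_suminf_weighted:
  fixes c J :: "nat \<Rightarrow> real" and h :: "nat \<Rightarrow> real \<Rightarrow> real"
  assumes h_integral: "\<And>n. (h n has_integral J n) {a..b}"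
    and h_nonneg: "\<And>n x. x \<in> {a..b} \<Longrightarrow> h n x \<ge> 0"
    and summable_J: "summable (\<lambda>n. \<bar>c n\<bar> * J n)"
    and summable_h: "\<And>x. x \<in> {a..b} \<Longrightarrow> summable (\<lambda>n. \<bar>c n\<bar> * h n x)"
  shows "((\<lambda>x. \<Sum>n. c n * h n x) has_integral (\<Sum>n. c n * J n)) {a..b}"
proof -
  define F where "F n x = indicator {a..b} x * (c n * h n x)" for n x
  have h_abs_int: "set_integrable lebesgue {a..b} (h n)" for n
    using nonnegative_absolutely_integrable_1 h_integral h_nonneg by blast
  have "set_lebesgue_integral lebesgue {a..b} (h n) = J n" for n
    using has_integral_set_lebesgue[OF h_abs_int[of n]] h_integral[of n] has_integral_unique by blast
  then have h_lebesgue: "(LINT x|lebesgue. indicator {a..b} x * h n x) = J n" for n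
    unfolding set_lebesgue_integral_def by simp
  have F_int: "integrable lebesgue (F n)" for n
    using set_integrable_mult_right[OF h_abs_int[of n], of "c n"]
    unfolding F_def[abs_def] set_integrable_def by simp
  have F_lebesgue: "(LINT x|lebesgue. F n x) = c n * J n" for n
    using h_lebesgue[of n] by (simp add: F_def mult.left_commute)
  have F_norm_lebesgue: "(LINT x|lebesgue. norm (F n x)) = \<bar>c n\<bar> * J n" for n
  proof -
    have "(LINT x|lebesgue. norm (F n x)) = (LINT x|lebesgue. \<bar>c n\<bar> * (indicator {a..b} x * h n x))"
      by (rule Bochner_Integration.integral_cong) (auto simp: F_def indicator_def abs_mult h_nonneg)
    then show ?thesis
      by (simp add: h_lebesgue)
  qed
  have "AE x in lebesgue. summable (\<lambda>n. norm (F n x))"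
    using summable_h h_nonneg by (intro AE_I2) (auto simp: F_def abs_mult indicator_def)
  note F_suminf = integrable_suminf[OF F_int this] integral_suminf[OF F_int this]
  have F_sum: "(\<Sum>n. F n x) = indicator {a..b} x * (\<Sum>n. c n * h n x)" for x
    by (simp add: F_def indicator_def)
  have "set_integrable lebesgue {a..b} (\<lambda>x. \<Sum>n. c n * h n x)"
    using F_suminf(1) summable_J unfolding set_integrable_def F_sum F_norm_lebesgue by simp
  from has_integral_set_lebesgue[OF this]
  show ?thesis
    using F_suminf(2) summable_J unfolding set_lebesgue_integral_def F_sum F_norm_lebesgue
    by (simp add: F_lebesgue)
qed

text \<open>Termwise form of \<open>D^\<nu> [t^(\<nu>(n+1)) / \<Gamma>(\<nu>(n+1) + 1)] = t^(\<nu> n) / \<Gamma>(\<nu> n + 1)\<close>, via Euler's Beta integral.\<close>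
lemma diffs_ml_coeff_Beta:
  assumes \<nu>: "\<nu> > 0"
  shows "\<nu> * diffs (ml_coeff \<nu> b) n * Beta (\<nu> * real (Suc n)) (1 - \<nu>)
           = Gamma (1 - \<nu>) * ml_coeff \<nu> (\<lambda>n. b (Suc n)) n"
proof -
  let ?m = "\<nu> * real (Suc n)"
  have m: "?m > 0"
    using \<nu> by simp
  then have Gamma_plus1_m: "Gamma (?m + 1) = ?m * Gamma ?m"
    by (intro Gamma_plus1) (auto elim!: nonpos_Ints_cases)
  have Gamma_m: "Gamma ?m \<noteq> 0"
    using Gamma_real_pos[OF m] by simp
  have diffs_eq: "diffs (ml_coeff \<nu> b) n = b (Suc n) / (\<nu> * Gamma ?m)"
    using \<nu> Gamma_m unfolding diffs_def ml_coeff_def Gamma_plus1_m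
    by (simp del: of_nat_Suc)
  have "Gamma (?m + (1 - \<nu>)) = Gamma (\<nu> * real n + 1)"
    by (rule arg_cong[where f = Gamma]) (simp add: algebra_simps)
  then show ?thesis
    using \<nu> Gamma_m unfolding Beta_def diffs_eq by (simp add: ml_coeff_def del: of_nat_Suc)
qed

context
  fixes \<nu> :: real and b :: "nat \<Rightarrow> real" and C R :: real
  assumes nu_pos: "0 < \<nu>" and coeff_bound: "\<And>n. \<bar>b n\<bar> \<le> C * R ^ n"
begin

lemma summable_ml_coeff: "summable (\<lambda>n. ml_coeff \<nu> b n * x ^ n)"
  by (rule summable_rabs_cancel[OF summable_ml_coeff_abs[OF nu_pos coeff_bound]])

lemma summable_diffs_ml_coeff_abs: "summable (\<lambda>n. \<bar>diffs (ml_coeff \<nu> b) n * x ^ n\<bar>)"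
proof -
  have "summable (\<lambda>n. \<bar>ml_coeff \<nu> b n\<bar> * y ^ n)" for y
    using summable_ml_coeff_abs[OF nu_pos coeff_bound, of y]
    by (rule summable_rabs_cancel[OF summable_comparison_test']) (simp add: abs_mult)
  then have "summable (\<lambda>n. diffs (\<lambda>n. \<bar>ml_coeff \<nu> b n\<bar>) n * \<bar>x\<bar> ^ n)"
    by (rule termdiff_converges_all)
  then show ?thesis
    by (simp add: diffs_def abs_mult power_abs)
qed

lemma ml_series_has_real_derivative:
  assumes t: "t > 0"
  shows "(ml_series \<nu> b has_real_derivative
           (\<Sum>n. diffs (ml_coeff \<nu> b) n * (t powr \<nu>) ^ n) * (\<nu> * t powr (\<nu> - 1))) (at t)"
  unfolding ml_series_def[abs_def]
  by (rule DERIV_chain2[OF termdiffs_strong_converges_everywhere[OF summable_ml_coeff]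
        has_real_derivative_powr[OF t]])

lemma continuous_on_ml_series: "continuous_on {0..} (ml_series \<nu> b)"
proof -
  have "continuous_on UNIV (\<lambda>x. \<Sum>n. ml_coeff \<nu> b n * x ^ n)"
    using termdiffs_strong_converges_everywhere[OF summable_ml_coeff] DERIV_isCont
    by (blast intro: continuous_at_imp_continuous_on)
  moreover have "continuous_on {0..} (\<lambda>t::real. t powr \<nu>)"
    using nu_pos by (intro continuous_on_powr' continuous_intros) auto
  ultimately show ?thesis
    unfolding ml_series_def[abs_def] by (rule continuous_on_compose2) auto
qed

lemma summable_deriv_ml_series_terms:
  assumes s: "s > 0"
  shows "summable (\<lambda>n. \<bar>\<nu> * diffs (ml_coeff \<nu> b) n * s powr (\<nu> * real (Suc n) - 1)\<bar>)"
proof -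
  have "\<bar>\<nu> * diffs (ml_coeff \<nu> b) n * s powr (\<nu> * real (Suc n) - 1)\<bar>
        = \<bar>diffs (ml_coeff \<nu> b) n * (s powr \<nu>) ^ n\<bar> * \<bar>\<nu> * s powr (\<nu> - 1)\<bar>" for n
    unfolding powr_Suc_mult_minus_one[OF s] by (simp add: abs_mult mult_ac)
  then show ?thesis
    using summable_mult2[OF summable_diffs_ml_coeff_abs] by presburger
qed

lemma deriv_ml_series:
  assumes s: "s > 0"
  shows "deriv (ml_series \<nu> b) s = (\<Sum>n. \<nu> * diffs (ml_coeff \<nu> b) n * s powr (\<nu> * real (Suc n) - 1))"
proof -
  have "deriv (ml_series \<nu> b) s = (\<Sum>n. diffs (ml_coeff \<nu> b) n * (s powr \<nu>) ^ n) * (\<nu> * s powr (\<nu> - 1))"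
    by (rule DERIV_imp_deriv[OF ml_series_has_real_derivative[OF s]])
  also have "\<dots> = (\<Sum>n. diffs (ml_coeff \<nu> b) n * (s powr \<nu>) ^ n * (\<nu> * s powr (\<nu> - 1)))"
    by (rule suminf_mult2[OF summable_rabs_cancel[OF summable_diffs_ml_coeff_abs]])
  finally show ?thesis
    unfolding powr_Suc_mult_minus_one[OF s] by (simp add: mult_ac)
qed

lemma has_caputo_derivative_ml_series_order_1:
  assumes "\<nu> = 1" and t: "t > 0"
  shows "has_caputo_derivative \<nu> (ml_series \<nu> b) t (ml_series \<nu> (\<lambda>n. b (Suc n)) t)"
proof -
  have "diffs (ml_coeff 1 b) n = ml_coeff 1 (\<lambda>n. b (Suc n)) n" for n
  proof -
    have "Gamma (real m + 1) = fact m" for m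
      using Gamma_fact[of m] by (simp add: add.commute)
    then show ?thesis
      by (simp add: diffs_def ml_coeff_def del: of_nat_Suc)
  qed
  then show ?thesis
    using ml_series_has_real_derivative[OF t] assms
    by (simp add: has_caputo_derivative_def ml_series_def)
qed

lemma has_integral_deriv_ml_series_Caputo_kernel:
  assumes \<nu>1: "\<nu> < 1" and t: "t > 0"
  shows "((\<lambda>s. deriv (ml_series \<nu> b) s * (t - s) powr (- \<nu>))
           has_integral Gamma (1 - \<nu>) * ml_series \<nu> (\<lambda>n. b (Suc n)) t) {0..t}"
proof -
  define c where "c n = \<nu> * diffs (ml_coeff \<nu> b) n" for n
  define h where "h n s = s powr (\<nu> * real (Suc n) - 1) * (t - s) powr (- \<nu>)" for n s
  define J where "J n = (t powr \<nu>) ^ n * Beta (\<nu> * real (Suc n)) (1 - \<nu>)" for n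
  define a where "a n = ml_coeff \<nu> (\<lambda>n. b (Suc n)) n * (t powr \<nu>) ^ n" for n
  have h_integral: "(h n has_integral J n) {0..t}" for n
    unfolding h_def J_def by (rule has_integral_power_Caputo_kernel[OF nu_pos \<nu>1 t])
  have h_nonneg: "h n s \<ge> 0" for n s
    by (simp add: h_def)
  have cJ: "\<bar>c n\<bar> * J n = Gamma (1 - \<nu>) * \<bar>a n\<bar>" "c n * J n = Gamma (1 - \<nu>) * a n" for n
  proof -
    show "c n * J n = Gamma (1 - \<nu>) * a n"
      using diffs_ml_coeff_Beta[OF nu_pos, of b n] by (simp add: c_def J_def a_def mult_ac)
    moreover have "J n \<ge> 0" "Gamma (1 - \<nu>) > 0"
      using has_integral_nonneg[OF h_integral] h_nonneg \<nu>1 by (auto intro: Gamma_real_pos)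
    ultimately show "\<bar>c n\<bar> * J n = Gamma (1 - \<nu>) * \<bar>a n\<bar>"
      by (metis abs_mult abs_of_nonneg abs_of_pos)
  qed
  have "\<bar>b (Suc n)\<bar> \<le> (C * R) * R ^ n" for n
    using coeff_bound[of "Suc n"] by (simp add: mult.assoc)
  then have summable_a: "summable (\<lambda>n. \<bar>a n\<bar>)"
    unfolding a_def by (rule summable_ml_coeff_abs[OF nu_pos])
  have summable_h: "summable (\<lambda>n. \<bar>c n\<bar> * h n s)" if "s \<in> {0..t}" for s
  proof (cases "s = 0")
    case False
    with that have "s > 0"
      by auto
    from summable_mult2[OF summable_deriv_ml_series_terms[OF this], of "(t - s) powr (- \<nu>)"]
    show ?thesis
      by (simp add: c_def h_def abs_mult mult_ac)
  qed (simp add: h_def)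
  have "((\<lambda>s. \<Sum>n. c n * h n s) has_integral (\<Sum>n. Gamma (1 - \<nu>) * a n)) {0..t}"
    using has_integral_suminf_weighted[OF h_integral h_nonneg _ summable_h] summable_mult[OF summable_a]
    by (simp add: cJ)
  then have "((\<lambda>s. \<Sum>n. c n * h n s) has_integral Gamma (1 - \<nu>) * ml_series \<nu> (\<lambda>n. b (Suc n)) t) {0..t}"
    using suminf_mult[OF summable_rabs_cancel[OF summable_a]] by (simp add: ml_series_def a_def)
  then show ?thesis
  proof (rule has_integral_spike_finite[of "{0, t}", rotated 2])
    fix s assume "s \<in> {0..t} - {0, t}"
    then have s: "s > 0"
      by auto
    show "deriv (ml_series \<nu> b) s * (t - s) powr (- \<nu>) = (\<Sum>n. c n * h n s)"
      unfolding deriv_ml_series[OF s] c_def h_def mult.assoc[symmetric]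
      by (rule suminf_mult2[OF summable_rabs_cancel[OF summable_deriv_ml_series_terms[OF s]]])
  qed auto
qed

lemma has_caputo_derivative_ml_series:
  assumes "\<nu> \<le> 1" and t: "t > 0"
  shows "has_caputo_derivative \<nu> (ml_series \<nu> b) t (ml_series \<nu> (\<lambda>n. b (Suc n)) t)"
proof (cases "\<nu> = 1")
  case False
  with assms have \<nu>1: "\<nu> < 1"
    by simp
  then have "Gamma (1 - \<nu>) > 0"
    by (intro Gamma_real_pos) simp
  moreover have "\<forall>s\<in>{0<..<t}. ml_series \<nu> b differentiable (at s)"
    using ml_series_has_real_derivative unfolding real_differentiable_def by (auto intro!: exI)
  ultimately show ?thesis
    using has_integral_deriv_ml_series_Caputo_kernel[OF \<nu>1 t] False
    unfolding has_caputo_derivative_def by (auto intro!: exI simp: less_imp_neq[symmetric])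
qed (use has_caputo_derivative_ml_series_order_1 t in auto)

end

section \<open>A maximum principle and uniqueness\<close>

lemma has_caputo_derivative_diff:
  assumes f: "has_caputo_derivative \<nu> f t D" and g: "has_caputo_derivative \<nu> g t E"
  shows "has_caputo_derivative \<nu> (\<lambda>x. f x - g x) t (D - E)"
proof (cases "\<nu> = 1")
  case True
  then show ?thesis
    using f g by (auto simp: has_caputo_derivative_def intro!: DERIV_diff)
next
  case False
  from f False obtain I where df: "\<forall>s\<in>{0<..<t}. f differentiable (at s)"
    and I: "((\<lambda>s. deriv f s * (t - s) powr (- \<nu>)) has_integral I) {0..t}"
    and D: "D = I / Gamma (1 - \<nu>)"
    by (auto simp: has_caputo_derivative_def)
  from g False obtain J where dg: "\<forall>s\<in>{0<..<t}. g differentiable (at s)"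
    and J: "((\<lambda>s. deriv g s * (t - s) powr (- \<nu>)) has_integral J) {0..t}"
    and E: "E = J / Gamma (1 - \<nu>)"
    by (auto simp: has_caputo_derivative_def)
  have "((\<lambda>s. deriv (\<lambda>x. f x - g x) s * (t - s) powr (- \<nu>)) has_integral I - J) {0..t}"
  proof (rule has_integral_spike_finite[OF _ _ has_integral_diff[OF I J]])
    fix s assume "s \<in> {0..t} - {0, t}"
    then have "f field_differentiable at s" "g field_differentiable at s"
      using df dg by (auto simp: field_differentiable_def real_differentiable_def)
    then show "deriv (\<lambda>x. f x - g x) s * (t - s) powr (- \<nu>)
               = deriv f s * (t - s) powr (- \<nu>) - deriv g s * (t - s) powr (- \<nu>)"
      by (simp add: left_diff_distrib)
  qed auto
  then show ?thesis
    using False df dg D E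
    by (auto simp: has_caputo_derivative_def diff_divide_distrib intro: differentiable_diff)
qed

lemma has_caputo_derivative_minus:
  assumes "has_caputo_derivative \<nu> f t D"
  shows "has_caputo_derivative \<nu> (\<lambda>x. - f x) t (- D)"
proof -
  have "has_caputo_derivative \<nu> (\<lambda>x. 0) t 0"
    by (auto simp: has_caputo_derivative_def intro!: exI[of _ 0])
  from has_caputo_derivative_diff[OF this assms] show ?thesis
    by simp
qed

lemma tendsto_diff_mult_powr_at_left:
  fixes d :: "real \<Rightarrow> real"
  assumes d: "(d has_real_derivative D) (at t)" and \<nu>: "\<nu> < 1"
  shows "((\<lambda>a. (d a - d t) * (t - a) powr (- \<nu>)) \<longlongrightarrow> 0) (at_left t)"
proof -
  have near: "eventually (\<lambda>a. a \<in> {t - 1<..<t}) (at_left t)"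
    by (rule eventually_at_left_real) simp
  have "((\<lambda>a. (d a - d t) / (a - t)) \<longlongrightarrow> D) (at_left t)"
    using d unfolding has_field_derivative_iff by (rule tendsto_within_subset) simp
  moreover have "((\<lambda>a. (t - a) powr (1 - \<nu>)) \<longlongrightarrow> (t - t) powr (1 - \<nu>)) (at_left t)"
    using \<nu> near by (intro tendsto_powr' tendsto_intros) (auto elim!: eventually_mono)
  ultimately have "((\<lambda>a. - ((d a - d t) / (a - t) * (t - a) powr (1 - \<nu>))) \<longlongrightarrow> - (D * 0)) (at_left t)"
    by (intro tendsto_minus tendsto_mult) simp_all
  moreover from near
  have "eventually (\<lambda>a. - ((d a - d t) / (a - t) * (t - a) powr (1 - \<nu>)) = (d a - d t) * (t - a) powr (- \<nu>)) (at_left t)"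
  proof eventually_elim
    case (elim a)
    then have e: "(t - a) powr (1 - \<nu>) = (t - a) * (t - a) powr (- \<nu>)"
      by (simp add: powr_diff powr_minus field_simps)
    have "a - t \<noteq> 0"
      using elim by simp
    then show ?case
      unfolding e by (simp add: field_simps)
  qed
  ultimately show ?thesis
    by (simp add: tendsto_cong)
qed

text \<open>Integration by parts against \<open>(d s - d t) (t - s)^(-\<nu>)\<close>; the extra term has the sign of \<open>d s - d t \<le> 0\<close>.\<close>
lemma caputo_integral_lower_bound:
  fixes d :: "real \<Rightarrow> real"
  assumes \<nu>: "0 \<le> \<nu>" and a: "0 < a" "a < t"
    and cont: "continuous_on {0..a} d" and diff: "\<And>s. s \<in> {0<..<a} \<Longrightarrow> d differentiable (at s)"
    and max: "\<And>s. s \<in> {0..a} \<Longrightarrow> d s \<le> d t"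
    and F: "((\<lambda>s. deriv d s * (t - s) powr (- \<nu>)) has_integral F) {0..a}"
  shows "(d a - d t) * (t - a) powr (- \<nu>) + (d t - d 0) * t powr (- \<nu>) \<le> F"
proof -
  define g where "g s = (d s - d t) * (t - s) powr (- \<nu>)" for s
  define g' where "g' s = deriv d s * (t - s) powr (- \<nu>) + (d s - d t) * (\<nu> * (t - s) powr (- \<nu> - 1))" for s
  have "continuous_on {0..a} g"
    unfolding g_def using a by (intro continuous_intros cont) auto
  moreover have "(g has_vector_derivative g' s) (at s)" if s: "s \<in> {0<..<a}" for s
  proof -
    have "(d has_real_derivative deriv d s) (at s)"
      using diff[OF s] DERIV_deriv_iff_real_differentiable by blast
    moreover have "t - s > 0"
      using s a by auto
    ultimately have "(g has_real_derivative g' s) (at s)"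
      unfolding g_def g'_def by (auto intro!: derivative_eq_intros simp: algebra_simps)
    then show ?thesis
      by (simp add: has_real_derivative_iff_has_vector_derivative)
  qed
  ultimately have "(g' has_integral g a - g 0) {0..a}"
    using a by (intro fundamental_theorem_of_calculus_interior) auto
  then have "g a - g 0 \<le> F"
  proof (rule has_integral_le[OF _ F])
    fix s assume "s \<in> {0..a}"
    then have "(d s - d t) * (\<nu> * (t - s) powr (- \<nu> - 1)) \<le> 0"
      using max \<nu> by (intro mult_nonpos_nonneg) auto
    then show "g' s \<le> deriv d s * (t - s) powr (- \<nu>)"
      by (simp add: g'_def)
  qed
  then show ?thesis
    by (simp add: g_def algebra_simps)
qed

lemma caputo_integral_at_maximum:
  fixes d :: "real \<Rightarrow> real"
  assumes \<nu>: "0 < \<nu>" "\<nu> < 1" and t: "0 < t"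
    and cont: "continuous_on {0..t} d" and diff: "\<And>s. s \<in> {0<..t} \<Longrightarrow> d differentiable (at s)"
    and max: "\<And>s. s \<in> {0..t} \<Longrightarrow> d s \<le> d t"
    and I: "((\<lambda>s. deriv d s * (t - s) powr (- \<nu>)) has_integral I) {0..t}"
  shows "(d t - d 0) * t powr (- \<nu>) \<le> I"
proof -
  define F where "F a = integral {0..a} (\<lambda>s. deriv d s * (t - s) powr (- \<nu>))" for a
  have "continuous_on {0..t} F"
    unfolding F_def using I by (intro indefinite_integral_continuous_1) blast
  then have "(F \<longlongrightarrow> F t) (at_left t)"
    using t unfolding continuous_on_def at_within_Icc_at_left[OF t, symmetric] by auto
  moreover have "F t = I"
    unfolding F_def using I by (rule integral_unique)
  ultimately have lim_F: "(F \<longlongrightarrow> I) (at_left t)"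
    by simp
  obtain D where "(d has_real_derivative D) (at t)"
    using diff[of t] t real_differentiable_def by auto
  then have lim_lower: "((\<lambda>a. (d a - d t) * (t - a) powr (- \<nu>) + (d t - d 0) * t powr (- \<nu>))
              \<longlongrightarrow> 0 + (d t - d 0) * t powr (- \<nu>)) (at_left t)"
    by (intro tendsto_add tendsto_diff_mult_powr_at_left \<nu>(2) tendsto_const)
  have "eventually (\<lambda>a. a \<in> {0<..<t}) (at_left t)"
    by (rule eventually_at_left_real[OF t])
  then have "eventually (\<lambda>a. (d a - d t) * (t - a) powr (- \<nu>) + (d t - d 0) * t powr (- \<nu>) \<le> F a) (at_left t)"
  proof eventually_elim
    case (elim a)
    then have a: "0 < a" "a < t"
      by auto
    have "((\<lambda>s. deriv d s * (t - s) powr (- \<nu>)) has_integral F a) {0..a}"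
      unfolding F_def using a
      by (intro integrable_integral integrable_subinterval_real[OF has_integral_integrable[OF I]]) auto
    then show ?case
      using a \<nu> diff max
      by (intro caputo_integral_lower_bound[OF _ a continuous_on_subset[OF cont]]) auto
  qed
  from tendsto_le[OF trivial_limit_at_left_real lim_F lim_lower this]
  show ?thesis
    by simp
qed

lemma caputo_max_principle:
  fixes d :: "real \<Rightarrow> real"
  assumes \<nu>: "0 < \<nu>" "\<nu> < 1" and L: "L \<ge> 0"
    and cont: "continuous_on {0..} d" and d0: "d 0 = 0"
    and caputo: "\<And>t. t > 0 \<Longrightarrow> has_caputo_derivative \<nu> d t (- L * d t)"
    and T: "T \<ge> 0"
  shows "d T \<le> 0"
proof (rule ccontr)
  assume neg: "\<not> d T \<le> 0"
  have "continuous_on {0..T} d"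
    by (rule continuous_on_subset[OF cont]) auto
  then obtain t where t: "t \<in> {0..T}" and max: "\<And>s. s \<in> {0..T} \<Longrightarrow> d s \<le> d t"
    using continuous_attains_sup[of "{0..T}" d] T by auto
  have "d T \<le> d t"
    using max T by simp
  with neg have dt: "d t > 0"
    by linarith
  with d0 have t_pos: "t > 0"
    using t by (cases "t = 0") auto
  from caputo[OF t_pos] \<nu> obtain I where
    I: "((\<lambda>s. deriv d s * (t - s) powr (- \<nu>)) has_integral I) {0..t}"
    and DI: "- L * d t = I / Gamma (1 - \<nu>)"
    by (auto simp: has_caputo_derivative_def)
  \<comment> \<open>differentiability at \<open>t\<close> itself is part of the hypothesis at any later time\<close>
  have "d differentiable (at s)" if "s \<in> {0<..t}" for s
    using caputo[of "t + 1"] \<nu> that t_pos by (auto simp: has_caputo_derivative_def)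
  then have "(d t - d 0) * t powr (- \<nu>) \<le> I"
    using t max by (intro caputo_integral_at_maximum[OF \<nu> t_pos _ _ _ I] continuous_on_subset[OF cont]) auto
  moreover have "(d t - d 0) * t powr (- \<nu>) > 0"
    using dt d0 t_pos by simp
  moreover have "Gamma (1 - \<nu>) > 0"
    using \<nu> by (intro Gamma_real_pos) auto
  ultimately have "- L * d t > 0"
    unfolding DI by (intro divide_pos_pos) linarith+
  with L dt show False
    using mult_nonneg_nonneg[OF L less_imp_le[OF dt]] by linarith
qed

lemma linear_ode_zero_unique:
  fixes d :: "real \<Rightarrow> real"
  assumes cont: "continuous_on {0..} d" and d0: "d 0 = 0"
    and deriv: "\<And>t. t > 0 \<Longrightarrow> (d has_real_derivative - L * d t) (at t)"
    and T: "T \<ge> 0"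
  shows "d T = 0"
proof -
  have "exp (L * T) * d T = exp (L * 0) * d 0"
  proof (cases "T = 0")
    case False
    with T show ?thesis
    proof (intro DERIV_isconst_end[of 0 T "\<lambda>t. exp (L * t) * d t"])
      show "continuous_on {0..T} (\<lambda>t. exp (L * t) * d t)"
        by (intro continuous_intros continuous_on_subset[OF cont]) auto
      fix x assume "0 < x" "x < T"
      then show "((\<lambda>t. exp (L * t) * d t) has_real_derivative 0) (at x)"
        by (auto intro!: derivative_eq_intros deriv simp: algebra_simps)
    qed auto
  qed simp
  then show ?thesis
    using d0 by simp
qed

lemma linear_caputo_zero_unique:
  fixes d :: "real \<Rightarrow> real"
  assumes \<nu>: "0 < \<nu>" "\<nu> \<le> 1" and L: "L \<ge> 0"
    and cont: "continuous_on {0..} d" and d0: "d 0 = 0"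
    and caputo: "\<And>t. t > 0 \<Longrightarrow> has_caputo_derivative \<nu> d t (- L * d t)"
    and T: "T \<ge> 0"
  shows "d T = 0"
proof (cases "\<nu> = 1")
  case True
  then show ?thesis
    using linear_ode_zero_unique[OF cont d0 _ T] caputo by (auto simp: has_caputo_derivative_def)
next
  case False
  with \<nu> have \<nu>1: "\<nu> < 1"
    by simp
  have "d T \<le> 0"
    by (rule caputo_max_principle[OF \<nu>(1) \<nu>1 L cont d0 caputo T])
  moreover have "- d T \<le> 0"
    using caputo d0 T has_caputo_derivative_minus
    by (intro caputo_max_principle[OF \<nu>(1) \<nu>1 L, of "\<lambda>x. - d x"] continuous_intros cont) fastforce+
  ultimately show ?thesis
    by simp
qed

section \<open>The system driven by a polynomial\<close>

lemma abs_coeff_mult_le: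
  fixes p q p' q' :: "real poly"
  assumes "\<And>i. \<bar>coeff p i\<bar> \<le> coeff q i" "\<And>i. \<bar>coeff p' i\<bar> \<le> coeff q' i"
  shows "\<bar>coeff (p * p') i\<bar> \<le> coeff (q * q') i"
proof -
  have "\<bar>coeff (p * p') i\<bar> \<le> (\<Sum>m\<le>i. \<bar>coeff p m\<bar> * \<bar>coeff p' (i - m)\<bar>)"
    unfolding coeff_mult by (rule order_trans[OF sum_abs]) (simp add: abs_mult)
  also have "\<dots> \<le> (\<Sum>m\<le>i. coeff q m * coeff q' (i - m))"
    by (intro sum_mono mult_mono assms) (auto intro: order_trans[OF abs_ge_zero assms(1)])
  finally show ?thesis
    by (simp add: coeff_mult)
qed

lemma abs_coeff_power_le: "\<bar>coeff (p ^ n) i\<bar> \<le> coeff (map_poly abs p ^ n) i"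
  for p :: "real poly"
proof (induction n arbitrary: i)
  case 0
  then show ?case
    by (simp add: coeff_1)
next
  case (Suc n)
  then show ?case
    by (simp add: abs_coeff_mult_le coeff_map_poly)
qed

lemma sum_abs_coeff_power_le:
  fixes p :: "real poly"
  assumes y: "y \<ge> 0"
  shows "(\<Sum>j\<le>N. \<bar>coeff (p ^ n) j\<bar> * y ^ j) \<le> poly (map_poly abs p) y ^ n"
proof -
  let ?W = "map_poly abs p ^ n"
  have W_nonneg: "coeff ?W j \<ge> 0" for j
    using abs_coeff_power_le[of p n j] by linarith
  have "(\<Sum>j\<le>N. \<bar>coeff (p ^ n) j\<bar> * y ^ j) \<le> (\<Sum>j\<le>N. coeff ?W j * y ^ j)"
    using y by (intro sum_mono mult_right_mono abs_coeff_power_le) auto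
  also have "\<dots> \<le> (\<Sum>j\<le>max N (degree ?W). coeff ?W j * y ^ j)"
    using y W_nonneg by (intro sum_mono2) auto
  also have "\<dots> = poly ?W y"
    unfolding poly_altdef by (rule sum.mono_neutral_right) (auto simp: coeff_eq_0)
  finally show ?thesis
    by (simp add: poly_power)
qed

lemma abs_coeff_power_le_poly: "\<bar>coeff (p ^ n) j\<bar> \<le> poly (map_poly abs p) 1 ^ n"
  for p :: "real poly"
proof -
  have "\<bar>coeff (p ^ n) j\<bar> = \<bar>coeff (p ^ n) j\<bar> * 1 ^ j"
    by simp
  also have "\<dots> \<le> (\<Sum>i\<le>j. \<bar>coeff (p ^ n) i\<bar> * 1 ^ i)"
    by (rule member_le_sum) auto
  also have "\<dots> \<le> poly (map_poly abs p) 1 ^ n"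
    by (rule sum_abs_coeff_power_le) simp
  finally show ?thesis .
qed

lemma has_sum_finite_support:
  fixes f :: "nat \<Rightarrow> real"
  assumes "\<And>j. j > D \<Longrightarrow> f j = 0"
  shows "(f has_sum (\<Sum>j\<le>D. f j)) UNIV"
proof -
  have "(f has_sum (\<Sum>j\<le>D. f j)) {..D}"
    by (rule has_sum_finite) simp
  then show ?thesis
    by (subst (asm) has_sum_cong_neutral[of UNIV "{..D}" f f]) (use assms in auto)
qed

context
  fixes \<nu> :: real and P :: "real poly"
  assumes nu_pos: "0 < \<nu>"
begin

lemma summable_ml_coeff_power_coeffs: "summable (\<lambda>n. ml_coeff \<nu> (\<lambda>n. coeff (P ^ n) j) n * x ^ n)"
  by (rule summable_ml_coeff[where C = 1 and R = "poly (map_poly abs P) 1", OF nu_pos])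
    (simp add: abs_coeff_power_le_poly)

lemma has_caputo_derivative_ml_series_power_coeffs:
  assumes \<nu>1: "\<nu> \<le> 1" and t: "t > 0"
  shows "has_caputo_derivative \<nu> (ml_series \<nu> (\<lambda>n. coeff (P ^ n) j)) t
           (\<Sum>i\<le>j. coeff P i * ml_series \<nu> (\<lambda>n. coeff (P ^ n) (j - i)) t)"
proof -
  have "has_caputo_derivative \<nu> (ml_series \<nu> (\<lambda>n. coeff (P ^ n) j)) t
          (ml_series \<nu> (\<lambda>n. coeff (P ^ Suc n) j) t)"
    by (rule has_caputo_derivative_ml_series[where C = 1 and R = "poly (map_poly abs P) 1", OF nu_pos _ \<nu>1 t])
      (simp add: abs_coeff_power_le_poly)
  moreover have "ml_series \<nu> (\<lambda>n. coeff (P ^ Suc n) j) t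
        = (\<Sum>i\<le>j. coeff P i * ml_series \<nu> (\<lambda>n. coeff (P ^ n) (j - i)) t)"
    by (subst ml_series_sum) (auto simp: coeff_mult summable_ml_coeff_power_coeffs)
  ultimately show ?thesis
    by simp
qed

text \<open>By induction on \<open>j\<close>: once the lower components agree, the difference of two solutions solves \<open>D^\<nu> d = coeff P 0 * d\<close>.\<close>
lemma caputo_convolution_system_eq_ml_series:
  fixes p :: "nat \<Rightarrow> real \<Rightarrow> real"
  assumes \<nu>1: "\<nu> \<le> 1" and P0: "coeff P 0 \<le> 0"
    and cont: "\<And>j. continuous_on {0..} (p j)"
    and init: "\<And>j. p j 0 = (if j = 0 then 1 else 0)"
    and caputo: "\<And>j t. t > 0 \<Longrightarrow> has_caputo_derivative \<nu> (p j) t (\<Sum>i\<le>j. coeff P i * p (j - i) t)"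
    and T: "T \<ge> 0"
  shows "p j T = ml_series \<nu> (\<lambda>n. coeff (P ^ n) j) T"
  using T
proof (induction j arbitrary: T rule: less_induct)
  case (less j)
  define q where "q i = ml_series \<nu> (\<lambda>n. coeff (P ^ n) i)" for i
  have "p j T - q j T = 0"
  proof (rule linear_caputo_zero_unique[OF nu_pos \<nu>1 _ _ _ _ less.prems])
    show "- coeff P 0 \<ge> 0"
      using P0 by simp
    show "continuous_on {0..} (\<lambda>t. p j t - q j t)"
      unfolding q_def using abs_coeff_power_le_poly
      by (intro continuous_intros cont continuous_on_ml_series[where C = 1 and R = "poly (map_poly abs P) 1", OF nu_pos]) simp
    show "p j 0 - q j 0 = 0"
      by (simp add: q_def init ml_series_0 coeff_1)
    fix t :: real assume t: "t > 0"
    have "(\<Sum>i\<le>j. coeff P i * (p (j - i) t - q (j - i) t)) = (\<Sum>i\<in>{0}. coeff P i * (p (j - i) t - q (j - i) t))"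
      using less.IH t by (intro sum.mono_neutral_right) (auto simp: q_def)
    then show "has_caputo_derivative \<nu> (\<lambda>t. p j t - q j t) t (- (- coeff P 0) * (p j t - q j t))"
      using has_caputo_derivative_diff[OF caputo[where j = j, OF t] has_caputo_derivative_ml_series_power_coeffs[OF \<nu>1 t, of j]]
      by (simp add: q_def sum_subtractf right_diff_distrib)
  qed
  then show ?case
    by (simp add: q_def)
qed

lemma summable_on_ml_power_coeffs:
  shows "(\<lambda>(n, j). ml_coeff \<nu> (\<lambda>n. coeff (P ^ n) j) n * x ^ n * y ^ j) summable_on UNIV"
proof -
  define u where "u = (\<lambda>(n, j). ml_coeff \<nu> (\<lambda>n. coeff (P ^ n) j) n * x ^ n * y ^ j)"
  define W where "W = poly (map_poly abs P) \<bar>y\<bar>"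
  define V where "V n = (\<Sum>j\<le>degree (P ^ n). norm (u (n, j)))" for n
  have V_nonneg: "V n \<ge> 0" for n
    unfolding V_def by (intro sum_nonneg) auto
  have "V n \<le> \<bar>W * x\<bar> ^ n / Gamma (\<nu> * real n + 1)" for n
  proof -
    have G: "Gamma (\<nu> * real n + 1) > 0"
      using nu_pos by (simp add: Gamma_mult_nat_plus1_pos)
    have "(\<Sum>j\<le>degree (P ^ n). \<bar>coeff (P ^ n) j\<bar> * \<bar>y\<bar> ^ j) \<le> W ^ n"
      unfolding W_def by (rule sum_abs_coeff_power_le) simp
    moreover have "W \<ge> 0"
      unfolding W_def poly_altdef
      by (intro sum_nonneg mult_nonneg_nonneg) (simp_all add: coeff_map_poly)
    ultimately have "(\<Sum>j\<le>degree (P ^ n). \<bar>coeff (P ^ n) j\<bar> * \<bar>y\<bar> ^ j) * \<bar>x\<bar> ^ n / Gamma (\<nu> * real n + 1)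
        \<le> \<bar>W * x\<bar> ^ n / Gamma (\<nu> * real n + 1)"
      using G by (intro divide_right_mono) (auto simp: power_mult_distrib abs_mult intro: mult_right_mono)
    then show ?thesis
      using G by (simp add: V_def u_def ml_coeff_def abs_mult power_abs sum_distrib_left sum_divide_distrib mult_ac)
  qed
  then have "summable V"
    using V_nonneg by (intro summable_comparison_test'[OF summable_Mittag_Leffler[OF nu_pos]]) auto
  then have "V summable_on UNIV"
    using V_nonneg summable_on_UNIV_nonneg_real_iff by blast
  moreover have "((\<lambda>j. norm (u (n, j))) has_sum V n) UNIV" for n
    unfolding V_def by (rule has_sum_finite_support) (simp add: u_def ml_coeff_def coeff_eq_0)
  ultimately have "(\<lambda>p. norm (u p)) summable_on UNIV"
    unfolding UNIV_Times_UNIV[symmetric] by (intro summable_on_SigmaI[where g = V]) auto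
  then show ?thesis
    unfolding u_def[symmetric] using summable_on_iff_abs_summable_on_real by blast
qed

lemma has_sum_ml_power_coeffs_row:
  "((\<lambda>j. ml_coeff \<nu> (\<lambda>n. coeff (P ^ n) j) n * x ^ n * y ^ j)
     has_sum (poly P y * x) ^ n / Gamma (\<nu> * real n + 1)) UNIV"
proof -
  have "((\<lambda>j. ml_coeff \<nu> (\<lambda>n. coeff (P ^ n) j) n * x ^ n * y ^ j)
          has_sum (\<Sum>j\<le>degree (P ^ n). ml_coeff \<nu> (\<lambda>n. coeff (P ^ n) j) n * x ^ n * y ^ j)) UNIV"
    by (rule has_sum_finite_support) (simp add: ml_coeff_def coeff_eq_0)
  moreover have "(\<Sum>j\<le>degree (P ^ n). ml_coeff \<nu> (\<lambda>n. coeff (P ^ n) j) n * x ^ n * y ^ j)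
                 = poly (P ^ n) y * x ^ n / Gamma (\<nu> * real n + 1)"
    by (simp add: ml_coeff_def poly_altdef sum_distrib_left sum_divide_distrib mult_ac)
  ultimately show ?thesis
    by (simp add: poly_power power_mult_distrib)
qed

lemma sums_ml_series_power_coeffs:
  shows "(\<lambda>j. y ^ j * ml_series \<nu> (\<lambda>n. coeff (P ^ n) j) t) sums mittag_leffler \<nu> 1 (poly P y * t powr \<nu>)"
proof -
  define x where "x = t powr \<nu>"
  define u where "u = (\<lambda>(n, j). ml_coeff \<nu> (\<lambda>n. coeff (P ^ n) j) n * x ^ n * y ^ j)"
  have "u summable_on UNIV"
    unfolding u_def by (rule summable_on_ml_power_coeffs)
  then obtain S where u: "(u has_sum S) UNIV"
    using has_sum_infsum by blast
  have "((\<lambda>j. u (n, j)) has_sum (poly P y * x) ^ n / Gamma (\<nu> * real n + 1)) UNIV" for n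
    unfolding u_def by (simp add: has_sum_ml_power_coeffs_row)
  from has_sum_Sigma'[OF u[unfolded UNIV_Times_UNIV[symmetric]] this]
  have "(\<lambda>n. (poly P y * x) ^ n / Gamma (\<nu> * real n + 1)) sums S"
    by (rule has_sum_imp_sums)
  then have mittag_leffler_eq: "mittag_leffler \<nu> 1 (poly P y * x) = S"
    unfolding mittag_leffler_def by (simp add: sums_iff)
  have coeff_bound: "\<bar>coeff (P ^ n) j\<bar> \<le> 1 * poly (map_poly abs P) 1 ^ n" for n j
    using abs_coeff_power_le_poly by simp
  have column: "((\<lambda>n. u (n, j)) has_sum y ^ j * ml_series \<nu> (\<lambda>n. coeff (P ^ n) j) t) UNIV" for j
  proof (rule norm_summable_imp_has_sum)
    have summable_column: "summable (\<lambda>n. \<bar>ml_coeff \<nu> (\<lambda>n. coeff (P ^ n) j) n * x ^ n\<bar>)"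
      by (rule summable_ml_coeff_abs[OF nu_pos coeff_bound])
    show "summable (\<lambda>n. norm (u (n, j)))"
      using summable_mult2[OF summable_column, where c = "\<bar>y ^ j\<bar>"]
      by (simp add: u_def abs_mult)
    show "(\<lambda>n. u (n, j)) sums (y ^ j * ml_series \<nu> (\<lambda>n. coeff (P ^ n) j) t)"
      using sums_mult2[OF summable_sums[OF summable_rabs_cancel[OF summable_column]], where c = "y ^ j"]
      by (simp add: u_def ml_series_def x_def mult_ac)
  qed
  have "((\<lambda>(j, n). u (n, j)) has_sum S) (UNIV \<times> UNIV)"
    using has_sum_swap[THEN iffD1, OF u[unfolded UNIV_Times_UNIV[symmetric]]] .
  then have "((\<lambda>j. y ^ j * ml_series \<nu> (\<lambda>n. coeff (P ^ n) j) t) has_sum S) UNIV"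
    by (rule has_sum_Sigma') (simp add: column)
  then show ?thesis
    using mittag_leffler_eq by (simp add: x_def has_sum_imp_sums)
qed

end

section \<open>The counting process\<close>

definition generator_poly :: "nat \<Rightarrow> (nat \<Rightarrow> real) \<Rightarrow> real poly" where
  "generator_poly k lam = (\<Sum>r=1..k. monom (lam r) r) - [:\<Sum>r=1..k. lam r:]"

lemma poly_generator_poly: "poly (generator_poly k lam) y = (\<Sum>r=1..k. lam r * (y ^ r - 1))"
  by (simp add: generator_poly_def poly_sum poly_monom right_diff_distrib sum_subtractf)

lemma coeff_generator_poly:
  "coeff (generator_poly k lam) i = (if i \<in> {1..k} then lam i else 0) - (if i = 0 then \<Sum>r=1..k. lam r else 0)"
  by (cases i) (simp_all add: generator_poly_def coeff_sum coeff_monom)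

lemma convolution_generator_poly:
  "(\<Sum>i\<le>j. coeff (generator_poly k lam) i * x (j - i))
     = (if j < k then \<Sum>r=1..j. lam r * x (j - r) else \<Sum>r=1..k. lam r * x (j - r))
       - (\<Sum>r=1..k. lam r) * x j"
proof -
  have "(\<Sum>i\<le>j. coeff (generator_poly k lam) i * x (j - i))
        = (\<Sum>i\<le>j. if i \<in> {1..k} then lam i * x (j - i) else 0)
          - (\<Sum>i\<le>j. if i = 0 then (\<Sum>r=1..k. lam r) * x (j - i) else 0)"
    unfolding sum_subtractf[symmetric] by (rule sum.cong) (auto simp: coeff_generator_poly left_diff_distrib)
  also have "(\<Sum>i\<le>j. if i \<in> {1..k} then lam i * x (j - i) else 0) = (\<Sum>i\<in>{..j} \<inter> {1..k}. lam i * x (j - i))"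
    by (rule sum.inter_restrict[symmetric]) simp
  also have "{..j} \<inter> {1..k} = (if j < k then {1..j} else {1..k})"
    by auto
  finally show ?thesis
    by simp
qed

lemma sums_indicator_level_sets:
  fixes X :: "'a \<Rightarrow> nat" and f :: "nat \<Rightarrow> real"
  assumes "\<omega> \<in> S"
  shows "(\<lambda>j. f j * indicator {x \<in> S. X x = j} \<omega>) sums f (X \<omega>)"
proof -
  have "(\<lambda>j. f j * indicator {x \<in> S. X x = j} \<omega>) = (\<lambda>j. if j = X \<omega> then f j else 0)"
    using assms by (auto simp: indicator_def)
  then show ?thesis
    using sums_single[of "X \<omega>" f] by simp
qed

lemma (in prob_space) integral_nat_valued:
  fixes X :: "'a \<Rightarrow> nat" and f :: "nat \<Rightarrow> real"
  assumes X: "X \<in> measurable M (count_space UNIV)"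
    and summable: "summable (\<lambda>j. \<bar>f j\<bar> * prob {\<omega> \<in> space M. X \<omega> = j})"
  shows "integrable M (\<lambda>\<omega>. f (X \<omega>)) \<and> (\<integral>\<omega>. f (X \<omega>) \<partial>M) = (\<Sum>j. f j * prob {\<omega> \<in> space M. X \<omega> = j})"
proof -
  define A where "A j = {\<omega> \<in> space M. X \<omega> = j}" for j
  define F where "F j \<omega> = f j * indicator (A j) \<omega>" for j \<omega>
  have A_sets: "A j \<in> sets M" for j
    unfolding A_def using X by (auto intro: measurable_sets_Collect)
  have F_int: "integrable M (F j)" for j
    unfolding F_def using A_sets[of j]
    by (intro integrable_mult_right integrable_real_indicator) (auto simp: less_top[symmetric])
  have F_sums: "(\<lambda>j. F j \<omega>) sums f (X \<omega>)" if "\<omega> \<in> space M" for \<omega>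
    unfolding F_def A_def using that by (rule sums_indicator_level_sets)
  have "AE \<omega> in M. summable (\<lambda>j. norm (F j \<omega>))"
    using sums_indicator_level_sets[where f = "\<lambda>j. \<bar>f j\<bar>" and S = "space M" and X = X]
    by (intro AE_I2) (auto simp: F_def A_def abs_mult sums_iff)
  moreover have "(\<integral>\<omega>. norm (F j \<omega>) \<partial>M) = \<bar>f j\<bar> * prob (A j)" for j
    using A_sets[of j] by (simp add: F_def abs_mult)
  then have "summable (\<lambda>j. \<integral>\<omega>. norm (F j \<omega>) \<partial>M)"
    using summable by (simp add: A_def)
  note F_suminf = integrable_suminf[OF F_int calculation this] integral_suminf[OF F_int calculation this]
  have F_sum: "(\<Sum>j. F j \<omega>) = f (X \<omega>)" if "\<omega> \<in> space M" for \<omega>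
    using F_sums[OF that] by (simp add: sums_iff)
  have "integrable M (\<lambda>\<omega>. f (X \<omega>)) \<longleftrightarrow> integrable M (\<lambda>\<omega>. \<Sum>j. F j \<omega>)"
    by (rule Bochner_Integration.integrable_cong) (simp_all add: F_sum)
  moreover have "(\<integral>\<omega>. f (X \<omega>) \<partial>M) = (\<integral>\<omega>. (\<Sum>j. F j \<omega>) \<partial>M)"
    by (rule Bochner_Integration.integral_cong) (simp_all add: F_sum)
  ultimately show ?thesis
    using F_suminf A_sets by (simp add: F_def A_def)
qed

theorem proposition2p1:
  fixes \<nu> :: real and k :: nat and lam :: "nat \<Rightarrow> real"
    and M :: "'a measure" and N :: "real \<Rightarrow> 'a \<Rightarrow> nat"
    and p :: "nat \<Rightarrow> real \<Rightarrow> real"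
  assumes nu: "0 < \<nu>" "\<nu> \<le> 1"
    and lam_pos: "\<And>r. r \<in> {1..k} \<Longrightarrow> lam r > 0"
    and prob: "prob_space M"
    and rv: "\<And>t. t \<ge> 0 \<Longrightarrow> N t \<in> measurable M (count_space UNIV)"
    and p_def: "\<And>j t. t \<ge> 0 \<Longrightarrow> p j t = measure M {\<omega> \<in> space M. N t \<omega> = j}"
    and cont: "\<And>j. continuous_on {0..} (p j)"
    and system: "\<And>j t. t > 0 \<Longrightarrow>
        has_caputo_derivative \<nu> (p j) t
          ((if j < k then (\<Sum>r=1..j. lam r * p (j - r) t) else (\<Sum>r=1..k. lam r * p (j - r) t))
           - (\<Sum>r=1..k. lam r) * p j t)"
    and init0: "p 0 0 = 1"
    and init: "\<And>j. j \<ge> 1 \<Longrightarrow> p j 0 = 0"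
    and t: "t \<ge> 0"
  shows "integrable M (\<lambda>\<omega>. exp (s * real (N t \<omega>))) \<and>
         (\<integral>\<omega>. exp (s * real (N t \<omega>)) \<partial>M)
           = mittag_leffler \<nu> 1 ((\<Sum>j=1..k. lam j * (exp (real j * s) - 1)) * t powr \<nu>)"
proof -
  interpret prob_space M
    by (rule prob)
  let ?P = "generator_poly k lam"
  have "(\<Sum>r=1..k. lam r) \<ge> 0"
    using lam_pos by (intro sum_nonneg) (auto intro: less_imp_le)
  then have "coeff ?P 0 \<le> 0"
    by (simp add: coeff_generator_poly)
  moreover have "has_caputo_derivative \<nu> (p j) t' (\<Sum>i\<le>j. coeff ?P i * p (j - i) t')" if "t' > 0" for j t'
    using system[OF that] unfolding convolution_generator_poly[where x = "\<lambda>i. p i t'"] .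
  ultimately have "p j t = ml_series \<nu> (\<lambda>n. coeff (?P ^ n) j) t" for j
    using init0 init by (intro caputo_convolution_system_eq_ml_series[OF nu _ cont _ _ t]) auto
  then have "(\<lambda>j. exp (s * real j) * prob {\<omega> \<in> space M. N t \<omega> = j})
               sums mittag_leffler \<nu> 1 ((\<Sum>j=1..k. lam j * (exp (real j * s) - 1)) * t powr \<nu>)"
    using sums_ml_series_power_coeffs[OF nu(1), where P = ?P and y = "exp s" and t = t] p_def[OF t]
    by (simp add: poly_generator_poly exp_of_nat_mult[symmetric] mult.commute)
  then show ?thesis
    using integral_nat_valued[OF rv[OF t], of "\<lambda>j. exp (s * real j)"] by (simp add: sums_iff)
qed

end
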